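(* For every integer $k\ge 1$ and every $\mathbf{PFO}^2$ formula $\phi(y)$ whose only free variable is $y$, there is a $\mathbf{PFO}^2$ formula $\chi_{\ge k}(x)$ with only free variable $x$ such that for every string $w$ and every position $n$: $w,n\models\chi_{\ge k}(x)$ iff there are at least $k$ positions $m<n$ with $w,m\models\phi(y)$. Consequently, for every $k\ge 1$ there is also a $\mathbf{PFO}^2$ formula $\chi_{=k}(x)$ expressing that exactly $k$ positions $m<x$ satisfy $\phi$.
   Context: Formulas of $\mathbf{PFO}^2$ over a finite alphabet $\Sigma$ use only two position variables $x,y$ (which may be re-quantified). Atomic formulas are $\pi_a(z)$ ($a\in\Sigma$, $z\in\{x,y\}$; "position $z$ carries $a$") and $z<z'$. Formulas are closed under $\wedge,\neg$ and under: from $\phi(x,y)$ form $\exists y<x:\phi(x,y)$ and $\exists x<y:\phi(x,y)$; from $\phi(x)$ with only free variable $x$ form $\exists x<y:\phi(x)$ and $\exists x:\phi(x)$; symmetrically with $x,y$ interchanged. On a string $w$ of length $N$, quantified variables range over $\{1,\dots,N\}$, a free variable may be assigned any position in $\{1,\dots,N+1\}$, and $\pi_a(z)$ holds iff $z\le N$ and $w_z=a$. *)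

theory Defs
  imports Main
begin

datatype var = X | Y

text \<open>Raw syntax of two-variable formulas over alphabet 'a.
  ExLess z z' phi stands for (exists z < z' : phi); ExAll z phi for (exists z : phi).\<close>
datatype 'a fo2 =
    Lab 'a var
  | Less var var
  | And "'a fo2" "'a fo2"
  | Neg "'a fo2"
  | ExLess var var "'a fo2"
  | ExAll var "'a fo2"

fun free :: "'a fo2 \<Rightarrow> var set" where
  "free (Lab a z) = {z}"
| "free (Less z z') = {z, z'}"
| "free (And p q) = free p \<union> free q"
| "free (Neg p) = free p"
| "free (ExLess z z' p) = (free p - {z}) \<union> {z'}"
| "free (ExAll z p) = free p - {z}"

inductive pfo2 :: "'a fo2 \<Rightarrow> bool" where
  "pfo2 (Lab a z)"
| "pfo2 (Less z z')"
| "pfo2 p \<Longrightarrow> pfo2 q \<Longrightarrow> pfo2 (And p q)"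
| "pfo2 p \<Longrightarrow> pfo2 (Neg p)"
| "pfo2 p \<Longrightarrow> z \<noteq> z' \<Longrightarrow> pfo2 (ExLess z z' p)"
| "pfo2 p \<Longrightarrow> free p \<subseteq> {z} \<Longrightarrow> pfo2 (ExAll z p)"

text \<open>Semantics on a string w (positions 1..length w, 1-indexed; w_z = w ! (z - 1)).
  The environment e assigns positions in {1..length w + 1} to the variables.\<close>
fun sat :: "'a list \<Rightarrow> (var \<Rightarrow> nat) \<Rightarrow> 'a fo2 \<Rightarrow> bool" where
  "sat w e (Lab a z) = (1 \<le> e z \<and> e z \<le> length w \<and> w ! (e z - 1) = a)"
| "sat w e (Less z z') = (e z < e z')"
| "sat w e (And p q) = (sat w e p \<and> sat w e q)"
| "sat w e (Neg p) = (\<not> sat w e p)"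
| "sat w e (ExLess z z' p) =
     (\<exists>m. 1 \<le> m \<and> m \<le> length w \<and> m < e z' \<and> sat w (e(z := m)) p)"
| "sat w e (ExAll z p) = (\<exists>m. 1 \<le> m \<and> m \<le> length w \<and> sat w (e(z := m)) p)"

definition admissible :: "'a list \<Rightarrow> (var \<Rightarrow> nat) \<Rightarrow> bool" where
  "admissible w e \<longleftrightarrow> (\<forall>v. 1 \<le> e v \<and> e v \<le> length w + 1)"

end

theory Submission
  imports Defs
begin

text \<open>At least \<open>k + 1\<close> positions before \<open>x\<close> satisfy \<open>\<phi>\<close> iff some position \<open>y < x\<close> satisfies
  \<open>\<phi>\<close> and has at least \<open>k\<close> such positions before it. Unfolding this recursion gives
  \<open>\<chi>\<^sub>\<ge>\<^sub>k\<close> as \<open>k\<close> nested bounded quantifiers; only two variables are needed because the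
  formula for \<open>k\<close> is renamed \<open>x \<leftrightarrow> y\<close> before being placed under \<open>\<exists>y < x\<close>.\<close>

fun swap_var :: "var \<Rightarrow> var" where
  "swap_var X = Y"
| "swap_var Y = X"

lemma swap_var_swap_var [simp]: "swap_var (swap_var z) = z"
  by (cases z) auto

lemma inj_swap_var: "inj swap_var"
  by (metis injI swap_var_swap_var)

fun swap_vars :: "'a fo2 \<Rightarrow> 'a fo2" where
  "swap_vars (Lab a z) = Lab a (swap_var z)"
| "swap_vars (Less z z') = Less (swap_var z) (swap_var z')"
| "swap_vars (And p q) = And (swap_vars p) (swap_vars q)"
| "swap_vars (Neg p) = Neg (swap_vars p)"
| "swap_vars (ExLess z z' p) = ExLess (swap_var z) (swap_var z') (swap_vars p)"
| "swap_vars (ExAll z p) = ExAll (swap_var z) (swap_vars p)"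

lemma fun_upd_comp_swap_var: "e(swap_var z := m) \<circ> swap_var = (e \<circ> swap_var)(z := m)"
  by (rule ext) (metis comp_apply fun_upd_apply swap_var_swap_var)

lemma sat_swap_vars: "sat w e (swap_vars p) \<longleftrightarrow> sat w (e \<circ> swap_var) p"
  by (induction p arbitrary: e) (auto simp: fun_upd_comp_swap_var)

lemma free_swap_vars: "free (swap_vars p) = swap_var ` free p"
  by (induction p) (auto simp: image_Un image_set_diff[OF inj_swap_var])

lemma pfo2_swap_vars: "pfo2 p \<Longrightarrow> pfo2 (swap_vars p)"
proof (induction rule: pfo2.induct)
  case (6 p z)
  then show ?case
    by (auto intro!: pfo2.intros simp: free_swap_vars)
qed (auto intro: pfo2.intros simp: inj_eq[OF inj_swap_var])

lemma sat_cong_free: "\<forall>v\<in>free p. e v = e' v \<Longrightarrow> sat w e p \<longleftrightarrow> sat w e' p"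
proof (induction p arbitrary: e e')
  case (ExLess z z' p)
  have "sat w (e(z := m)) p \<longleftrightarrow> sat w (e'(z := m)) p" for m
    using ExLess.prems by (intro ExLess.IH) auto
  then show ?case
    using ExLess.prems by simp
next
  case (ExAll z p)
  have "sat w (e(z := m)) p \<longleftrightarrow> sat w (e'(z := m)) p" for m
    using ExAll.prems by (intro ExAll.IH) auto
  then show ?case
    by simp
next
  case (And p q)
  have "sat w e p \<longleftrightarrow> sat w e' p" "sat w e q \<longleftrightarrow> sat w e' q"
    using And.prems by (simp_all add: And.IH)
  then show ?case
    by simp
qed auto
lemma sat_fun_upd_Y:
  assumes "free \<phi> \<subseteq> {Y}"
  shows "sat w (e(Y := m)) \<phi> \<longleftrightarrow> sat w (\<lambda>_. m) \<phi>"
  using assms by (intro sat_cong_free) auto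

definition sat_positions :: "'a list \<Rightarrow> 'a fo2 \<Rightarrow> nat set" where
  "sat_positions w \<phi> = {m. 1 \<le> m \<and> m \<le> length w \<and> sat w (\<lambda>_. m) \<phi>}"

lemma finite_sat_positions: "finite (sat_positions w \<phi>)"
  unfolding sat_positions_def by (rule finite_subset[of _ "{..length w}"]) auto

lemma Suc_le_card_less_iff:
  fixes A :: "'a::linorder set"
  assumes "finite A"
  shows "Suc k \<le> card {x\<in>A. x < n} \<longleftrightarrow> (\<exists>m\<in>A. m < n \<and> k \<le> card {x\<in>A. x < m})"
proof
  assume "\<exists>m\<in>A. m < n \<and> k \<le> card {x\<in>A. x < m}"
  then obtain m where m: "m \<in> A" "m < n" "k \<le> card {x\<in>A. x < m}"
    by blast
  have "Suc (card {x\<in>A. x < m}) = card (insert m {x\<in>A. x < m})"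
    using assms by simp
  also have "\<dots> \<le> card {x\<in>A. x < n}"
    using assms m by (intro card_mono) auto
  finally show "Suc k \<le> card {x\<in>A. x < n}"
    using m by simp
next
  define B where "B = {x\<in>A. x < n}"
  assume "Suc k \<le> card {x\<in>A. x < n}"
  then have k: "Suc k \<le> card B"
    by (simp add: B_def)
  have "finite B"
    using assms by (simp add: B_def)
  moreover have "B \<noteq> {}"
    using k by auto
  ultimately have max: "Max B \<in> B" "\<And>x. x \<in> B \<Longrightarrow> x \<le> Max B"
    by simp_all
  have "k \<le> card (B - {Max B})"
    using k max(1) \<open>finite B\<close> by simp
  also have "\<dots> \<le> card {x\<in>A. x < Max B}"
    using assms max by (intro card_mono) (auto simp: B_def less_le)
  finally show "\<exists>m\<in>A. m < n \<and> k \<le> card {x\<in>A. x < m}"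
    using max(1) unfolding B_def by blast
qed

fun at_least :: "'a fo2 \<Rightarrow> nat \<Rightarrow> 'a fo2" where
  "at_least \<phi> 0 = Neg (Less X X)"
| "at_least \<phi> (Suc k) = ExLess Y X (And \<phi> (swap_vars (at_least \<phi> k)))"

lemma pfo2_at_least: "pfo2 \<phi> \<Longrightarrow> pfo2 (at_least \<phi> k)"
  by (induction k) (auto intro!: pfo2.intros pfo2_swap_vars)

lemma free_at_least: "free \<phi> \<subseteq> {Y} \<Longrightarrow> free (at_least \<phi> k) \<subseteq> {X}"
  by (induction k) (auto simp: free_swap_vars)

lemma sat_at_least:
  assumes "free \<phi> \<subseteq> {Y}"
  shows "sat w e (at_least \<phi> k) \<longleftrightarrow> k \<le> card {m \<in> sat_positions w \<phi>. m < e X}"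
proof (induction k arbitrary: e)
  case 0
  then show ?case
    by simp
next
  case (Suc k)
  have "sat w (e(Y := m) \<circ> swap_var) (at_least \<phi> k) \<longleftrightarrow>
      k \<le> card {x \<in> sat_positions w \<phi>. x < m}" for m
    using Suc.IH by simp
  then have "sat w e (at_least \<phi> (Suc k)) \<longleftrightarrow>
      (\<exists>m \<in> sat_positions w \<phi>. m < e X \<and> k \<le> card {x \<in> sat_positions w \<phi>. x < m})"
    by (auto simp: sat_swap_vars sat_fun_upd_Y[OF assms] sat_positions_def simp del: fun_upd_apply)
  also have "\<dots> \<longleftrightarrow> Suc k \<le> card {m \<in> sat_positions w \<phi>. m < e X}"
    by (rule Suc_le_card_less_iff[OF finite_sat_positions, symmetric])
  finally show ?case .
qed

definition exactly :: "'a fo2 \<Rightarrow> nat \<Rightarrow> 'a fo2" where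
  "exactly \<phi> k = And (at_least \<phi> k) (Neg (at_least \<phi> (Suc k)))"

lemma pfo2_exactly: "pfo2 \<phi> \<Longrightarrow> pfo2 (exactly \<phi> k)"
  unfolding exactly_def by (intro pfo2.intros pfo2_at_least)

lemma free_exactly:
  assumes "free \<phi> \<subseteq> {Y}"
  shows "free (exactly \<phi> k) \<subseteq> {X}"
  using free_at_least[OF assms] by (simp add: exactly_def del: at_least.simps)

lemma sat_exactly:
  assumes "free \<phi> \<subseteq> {Y}"
  shows "sat w e (exactly \<phi> k) \<longleftrightarrow> card {m \<in> sat_positions w \<phi>. m < e X} = k"
  unfolding exactly_def sat.simps sat_at_least[OF assms] by linarith

lemma sat_positions_before:
  assumes "admissible w e" "free \<phi> \<subseteq> {Y}"
  shows "{m. 1 \<le> m \<and> m < e X \<and> sat w (e(Y := m)) \<phi>} = {m \<in> sat_positions w \<phi>. m < e X}"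
proof -
  have "e X \<le> length w + 1"
    using assms(1) unfolding admissible_def by blast
  then show ?thesis
    by (auto simp: sat_positions_def sat_fun_upd_Y[OF assms(2)])
qed

theorem mainTheorem4:
  fixes k :: nat and \<phi> :: "'a fo2"
  assumes "k \<ge> 1" and "pfo2 \<phi>" and "free \<phi> \<subseteq> {Y}"
  shows "(\<exists>\<chi>. pfo2 \<chi> \<and> free \<chi> \<subseteq> {X} \<and>
            (\<forall>(w :: 'a list) e. admissible w e \<longrightarrow>
               (sat w e \<chi> \<longleftrightarrow> k \<le> card {m. 1 \<le> m \<and> m < e X \<and> sat w (e(Y := m)) \<phi>})))
       \<and> (\<exists>\<chi>. pfo2 \<chi> \<and> free \<chi> \<subseteq> {X} \<and>
            (\<forall>(w :: 'a list) e. admissible w e \<longrightarrow>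
               (sat w e \<chi> \<longleftrightarrow> card {m. 1 \<le> m \<and> m < e X \<and> sat w (e(Y := m)) \<phi>} = k)))"
  \<comment> \<open>The construction works for \<open>k = 0\<close> as well.\<close>
proof (intro conjI)
  show "\<exists>\<chi>. pfo2 \<chi> \<and> free \<chi> \<subseteq> {X} \<and>
            (\<forall>(w :: 'a list) e. admissible w e \<longrightarrow>
               (sat w e \<chi> \<longleftrightarrow> k \<le> card {m. 1 \<le> m \<and> m < e X \<and> sat w (e(Y := m)) \<phi>}))"
    using pfo2_at_least[OF assms(2)] free_at_least[OF assms(3)]
      sat_at_least[OF assms(3)] sat_positions_before[OF _ assms(3)]
    by (intro exI[of _ "at_least \<phi> k"]) simp
  show "\<exists>\<chi>. pfo2 \<chi> \<and> free \<chi> \<subseteq> {X} \<and>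
            (\<forall>(w :: 'a list) e. admissible w e \<longrightarrow>
               (sat w e \<chi> \<longleftrightarrow> card {m. 1 \<le> m \<and> m < e X \<and> sat w (e(Y := m)) \<phi>} = k))"
    using pfo2_exactly[OF assms(2)] free_exactly[OF assms(3)]
      sat_exactly[OF assms(3)] sat_positions_before[OF _ assms(3)]
    by (intro exI[of _ "exactly \<phi> k"]) simp
qed

end
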